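(* Let $\varphi:L\to L'$ be a morphism of co-Heyting algebras and $d$ a positive integer. (1) $\varphi(dL)\subseteq dL'$. (2) If $\varphi$ is surjective then: (a) $\varphi(dL)=dL'$; (b) $\dim L'<d$ if and only if $dL\subseteq\operatorname{Ker}\varphi$; (c) $\operatorname{Ker}\varphi\subseteq dL$ if and only if $\varphi^{-1}(dL')=dL$. (3) If $\varphi$ is surjective and the ideal $dL$ is principal, then $dL'$ is principal and $\varphi(\varepsilon_d(L))=\varepsilon_d(L')$.
   Context: A co-Heyting algebra is a bounded distributive lattice $(L,0,1,\vee,\wedge)$ such that $a-b=\min\{c\in L: a\le b\vee c\}$ exists for all $a,b$; morphisms preserve $0,1,\vee,\wedge,-$, and $\operatorname{Ker}\varphi=\varphi^{-1}(\{0\})$. $\operatorname{Spec}L$ is the set of prime filters ordered by inclusion; the height (resp. coheight) of a prime filter is its foundation rank (resp. foundation rank for the reverse order) in $\operatorname{Spec}L$, where foundation rank is defined by: $\operatorname{rk}x\ge\beta+1$ iff some $y<x$ has $\operatorname{rk}y\ge\beta$, and at limit ordinals by intersection. $\operatorname{codim}_L a=\min\{\operatorname{height}\mathfrak p: a\in\mathfrak p\in\operatorname{Spec}L\}$ ($\min\emptyset=+\infty$), $\dim_L a=\sup\{\operatorname{coheight}\mathfrak p: a\in\mathfrak p\in\operatorname{Spec}L\}$ ($\sup\emptyset=-\infty$), and $\dim L=\dim_L 1$. $dL=\{a\in L:\operatorname{codim}_La\ge d\}$, an ideal of $L$; when it is principal, $\varepsilon_d(L)$ denotes its generator. *)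

theory Defs
  imports Main "HOL-Library.Extended_Real"
begin

definition coheyting :: "'a::{bounded_lattice,distrib_lattice} itself \<Rightarrow> bool" where
  "coheyting _ \<longleftrightarrow> (\<forall>a b::'a. \<exists>c. a \<le> sup b c \<and> (\<forall>c'. a \<le> sup b c' \<longrightarrow> c \<le> c'))"

definition cminus :: "'a::{bounded_lattice,distrib_lattice} \<Rightarrow> 'a \<Rightarrow> 'a" where
  "cminus a b = (LEAST c. a \<le> sup b c)"

definition coheyting_hom ::
  "('a::{bounded_lattice,distrib_lattice} \<Rightarrow> 'b::{bounded_lattice,distrib_lattice}) \<Rightarrow> bool" where
  "coheyting_hom f \<longleftrightarrow> f bot = bot \<and> f top = top \<and>
     (\<forall>a b. f (sup a b) = sup (f a) (f b)) \<and>
     (\<forall>a b. f (inf a b) = inf (f a) (f b)) \<and>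
     (\<forall>a b. f (cminus a b) = cminus (f a) (f b))"

definition Ker :: "('a \<Rightarrow> 'b::bounded_lattice) \<Rightarrow> 'a set" where
  "Ker f = f -` {bot}"

definition prime_filter :: "'a::{bounded_lattice,distrib_lattice} set \<Rightarrow> bool" where
  "prime_filter F \<longleftrightarrow> top \<in> F \<and> bot \<notin> F \<and>
     (\<forall>a b. a \<in> F \<longrightarrow> a \<le> b \<longrightarrow> b \<in> F) \<and>
     (\<forall>a b. a \<in> F \<longrightarrow> b \<in> F \<longrightarrow> inf a b \<in> F) \<and>
     (\<forall>a b. sup a b \<in> F \<longrightarrow> a \<in> F \<or> b \<in> F)"

definition Spec :: "'a::{bounded_lattice,distrib_lattice} set set" where
  "Spec = {F. prime_filter F}"

text \<open>rank_ge R x n: the foundation rank of x w.r.t. the strict order R is \<ge> n,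
  following "rk x \<ge> \<beta>+1 iff some y < x has rk y \<ge> \<beta>" (every x has rk \<ge> 0).\<close>

primrec rank_ge :: "('a \<Rightarrow> 'a \<Rightarrow> bool) \<Rightarrow> 'a \<Rightarrow> nat \<Rightarrow> bool" where
  "rank_ge R x 0 = True"
| "rank_ge R x (Suc n) = (\<exists>y. R y x \<and> rank_ge R y n)"

text \<open>Rank as an extended real; a rank \<ge> \<omega> is recorded as \<infinity>.\<close>

definition rank :: "('a \<Rightarrow> 'a \<Rightarrow> bool) \<Rightarrow> 'a \<Rightarrow> ereal" where
  "rank R x = (SUP n\<in>{n. rank_ge R x n}. ereal (real n))"

definition height :: "'a::{bounded_lattice,distrib_lattice} set \<Rightarrow> ereal" where
  "height p = rank (\<lambda>q q'. q \<in> Spec \<and> q' \<in> Spec \<and> q \<subset> q') p"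

definition coheight :: "'a::{bounded_lattice,distrib_lattice} set \<Rightarrow> ereal" where
  "coheight p = rank (\<lambda>q q'. q \<in> Spec \<and> q' \<in> Spec \<and> q' \<subset> q) p"

definition codim :: "'a::{bounded_lattice,distrib_lattice} \<Rightarrow> ereal" where
  "codim a = (INF p\<in>{p\<in>Spec. a \<in> p}. height p)"

definition dim :: "'a::{bounded_lattice,distrib_lattice} \<Rightarrow> ereal" where
  "dim a = (SUP p\<in>{p\<in>Spec. a \<in> p}. coheight p)"

definition dimL :: "'a::{bounded_lattice,distrib_lattice} itself \<Rightarrow> ereal" where
  "dimL _ = dim (top::'a)"

definition dpart :: "nat \<Rightarrow> 'a::{bounded_lattice,distrib_lattice} set" where
  "dpart d = {a. codim a \<ge> ereal (real d)}"

definition principal_ideal :: "'a::order set \<Rightarrow> bool" where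
  "principal_ideal I \<longleftrightarrow> (\<exists>e. I = {a. a \<le> e})"

definition eps :: "nat \<Rightarrow> 'a::{bounded_lattice,distrib_lattice}" where
  "eps d = (THE e. dpart d = {a. a \<le> e})"

end

theory Submission
  imports Defs
begin

(* A prime filter has height at least k iff it contains an element
   chain_elem [x1, ..., xk] = x1 \<sqinter> (chain_elem [x2, ..., xk] - x1); hence dL is the ideal
   generated by these elements. Co-Heyting morphisms map such elements to such elements, onto
   them when surjective, which gives \<phi>(dL) \<subseteq> dL' with equality for surjective \<phi>, and the
   principal case with it. A chain of primes can be read from either end, so dim L < d iff no
   prime has height \<ge> d, iff dL = {0} (every nonzero element lies in a prime); thus (2b) says
   dL' = \<phi>(dL) = {0}. For (2c): if \<phi> a = \<phi> t with t \<in> dL, then a \<le> t \<squnion> (a - t) with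
   a - t \<in> Ker \<phi>. *)

section \<open>Filters, ideals and the prime filter theorem\<close>

definition lattice_filter :: "'a::bounded_lattice set \<Rightarrow> bool" where
  "lattice_filter F \<longleftrightarrow> top \<in> F \<and> (\<forall>a b. a \<in> F \<longrightarrow> a \<le> b \<longrightarrow> b \<in> F)
     \<and> (\<forall>a b. a \<in> F \<longrightarrow> b \<in> F \<longrightarrow> inf a b \<in> F)"

definition lattice_ideal :: "'a::bounded_lattice set \<Rightarrow> bool" where
  "lattice_ideal I \<longleftrightarrow> bot \<in> I \<and> (\<forall>a b. b \<in> I \<longrightarrow> a \<le> b \<longrightarrow> a \<in> I)
     \<and> (\<forall>a b. a \<in> I \<longrightarrow> b \<in> I \<longrightarrow> sup a b \<in> I)"

lemma lattice_filterD:
  assumes "lattice_filter F"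
  shows "top \<in> F" and "a \<in> F \<Longrightarrow> a \<le> b \<Longrightarrow> b \<in> F" and "a \<in> F \<Longrightarrow> b \<in> F \<Longrightarrow> inf a b \<in> F"
  using assms unfolding lattice_filter_def by blast+

lemma lattice_idealD:
  assumes "lattice_ideal I"
  shows "bot \<in> I" and "b \<in> I \<Longrightarrow> a \<le> b \<Longrightarrow> a \<in> I" and "a \<in> I \<Longrightarrow> b \<in> I \<Longrightarrow> sup a b \<in> I"
  using assms unfolding lattice_ideal_def by blast+

lemma Spec_memD:
  assumes "p \<in> Spec"
  shows Spec_top: "top \<in> p" and Spec_bot: "bot \<notin> p"
    and Spec_up: "a \<in> p \<Longrightarrow> a \<le> b \<Longrightarrow> b \<in> p"
    and Spec_inf: "a \<in> p \<Longrightarrow> b \<in> p \<Longrightarrow> inf a b \<in> p"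
    and Spec_sup: "sup a b \<in> p \<Longrightarrow> a \<in> p \<or> b \<in> p"
  using assms unfolding Spec_def prime_filter_def by blast+

lemma Spec_memI:
  assumes "lattice_filter P" and "bot \<notin> P" and "\<And>a b. sup a b \<in> P \<Longrightarrow> a \<in> P \<or> b \<in> P"
  shows "P \<in> Spec"
  using assms unfolding Spec_def prime_filter_def lattice_filter_def by blast

lemma lattice_ideal_singleton_bot: "lattice_ideal {bot}"
  unfolding lattice_ideal_def by (auto simp: bot_unique)

lemma lattice_ideal_Compl_Spec: "p \<in> Spec \<Longrightarrow> lattice_ideal (- p)"
  unfolding lattice_ideal_def using Spec_memD by blast

lemma lattice_ideal_adjoin:
  assumes "lattice_ideal I"
  shows "lattice_ideal {y. \<exists>c\<in>I. y \<le> sup c x}"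
  unfolding lattice_ideal_def
proof (intro conjI allI impI)
  show "bot \<in> {y. \<exists>c\<in>I. y \<le> sup c x}"
    using lattice_idealD(1)[OF assms] by auto
next
  fix a b assume "b \<in> {y. \<exists>c\<in>I. y \<le> sup c x}" "a \<le> b"
  then show "a \<in> {y. \<exists>c\<in>I. y \<le> sup c x}" by (auto intro: order_trans)
next
  fix a b assume "a \<in> {y. \<exists>c\<in>I. y \<le> sup c x}" "b \<in> {y. \<exists>c\<in>I. y \<le> sup c x}"
  then obtain c1 c2 where c: "c1 \<in> I" "c2 \<in> I" and "a \<le> sup c1 x" "b \<le> sup c2 x" by blast
  then have "sup a b \<le> sup (sup c1 x) (sup c2 x)" by (intro sup_mono)
  also have "\<dots> = sup (sup c1 c2) x" by (simp add: sup_aci)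
  finally show "sup a b \<in> {y. \<exists>c\<in>I. y \<le> sup c x}"
    using lattice_idealD(3)[OF assms c] by blast
qed

lemma lattice_filter_Union_chain:
  assumes "C \<noteq> {}" and filters: "\<forall>F\<in>C. lattice_filter F"
    and chain: "\<forall>F\<in>C. \<forall>G\<in>C. F \<subseteq> G \<or> G \<subseteq> F"
  shows "lattice_filter (\<Union>C)"
  unfolding lattice_filter_def
proof (intro conjI allI impI)
  show "top \<in> \<Union>C" using assms(1) filters unfolding lattice_filter_def by blast
next
  fix a b assume "a \<in> \<Union>C" "a \<le> b"
  then show "b \<in> \<Union>C" using filters unfolding lattice_filter_def by blast
next
  fix a b assume "a \<in> \<Union>C" "b \<in> \<Union>C"
  then obtain F G where F: "F \<in> C" "a \<in> F" and G: "G \<in> C" "b \<in> G" by blast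
  from chain F(1) G(1) have "\<exists>H\<in>C. a \<in> H \<and> b \<in> H" using F(2) G(2) by blast
  then obtain H where "H \<in> C" "a \<in> H" "b \<in> H" by blast
  moreover from this have "inf a b \<in> H" using filters unfolding lattice_filter_def by blast
  ultimately show "inf a b \<in> \<Union>C" by blast
qed

lemma lattice_filter_adjoin:
  assumes "lattice_filter M"
  shows "lattice_filter {y. \<exists>m\<in>M. inf m c \<le> y}"
  unfolding lattice_filter_def
proof (intro conjI allI impI)
  show "top \<in> {y. \<exists>m\<in>M. inf m c \<le> y}"
    using lattice_filterD(1)[OF assms] by auto
next
  fix a b assume "a \<in> {y. \<exists>m\<in>M. inf m c \<le> y}" "a \<le> b"
  then show "b \<in> {y. \<exists>m\<in>M. inf m c \<le> y}" by (auto intro: order_trans)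
next
  fix a b assume "a \<in> {y. \<exists>m\<in>M. inf m c \<le> y}" "b \<in> {y. \<exists>m\<in>M. inf m c \<le> y}"
  then obtain m1 m2 where m: "m1 \<in> M" "m2 \<in> M" and "inf m1 c \<le> a" "inf m2 c \<le> b" by blast
  have "inf (inf m1 m2) c = inf (inf m1 c) (inf m2 c)" by (simp add: inf_aci)
  also have "\<dots> \<le> inf a b" using \<open>inf m1 c \<le> a\<close> \<open>inf m2 c \<le> b\<close> by (rule inf_mono)
  finally show "inf a b \<in> {y. \<exists>m\<in>M. inf m c \<le> y}"
    using lattice_filterD(3)[OF assms m] by blast
qed

text \<open>If a, b \<notin> M, adjoining either of them to M meets I; as M contains a \<squnion> b,
  distributivity then makes M itself meet I.\<close>

lemma maximal_filter_prime:
  fixes M I :: "'a::{bounded_lattice,distrib_lattice} set"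
  assumes M: "lattice_filter M" and I: "lattice_ideal I" and disj: "M \<inter> I = {}"
    and max: "\<And>F. lattice_filter F \<Longrightarrow> M \<subseteq> F \<Longrightarrow> F \<inter> I = {} \<Longrightarrow> F = M"
  shows "M \<in> Spec"
proof (rule Spec_memI[OF M])
  have meets: "\<exists>m\<in>M. inf m c \<in> I" if "c \<notin> M" for c
  proof -
    let ?F = "{y. \<exists>m\<in>M. inf m c \<le> y}"
    have "c \<in> ?F" using lattice_filterD(1)[OF M] inf_le2 by blast
    have "M \<subseteq> ?F" using inf_le1 by blast
    have "?F \<inter> I \<noteq> {}"
    proof
      assume "?F \<inter> I = {}"
      with \<open>M \<subseteq> ?F\<close> have "?F = M" by (rule max[OF lattice_filter_adjoin[OF M, of c]])
      with \<open>c \<in> ?F\<close> that show False by simp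
    qed
    then obtain y m where "m \<in> M" "inf m c \<le> y" "y \<in> I" by blast
    then show ?thesis using lattice_idealD(2)[OF I] by blast
  qed
  show "a \<in> M \<or> b \<in> M" if ab: "sup a b \<in> M" for a b
  proof (rule ccontr)
    assume "\<not> (a \<in> M \<or> b \<in> M)"
    then obtain m1 m2 where m1: "m1 \<in> M" "inf m1 a \<in> I" and m2: "m2 \<in> M" "inf m2 b \<in> I"
      using meets by blast
    define m where "m = inf (inf m1 m2) (sup a b)"
    have "m \<in> M" unfolding m_def by (intro lattice_filterD(3)[OF M] m1(1) m2(1) ab)
    have "m \<le> m1" "m \<le> m2" unfolding m_def by (simp_all add: le_infI1)
    then have "inf m a \<in> I" "inf m b \<in> I"
      using lattice_idealD(2)[OF I] m1(2) m2(2) inf_mono[OF _ order_refl] by blast+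
    then have "sup (inf m a) (inf m b) \<in> I" by (rule lattice_idealD(3)[OF I])
    moreover have "m = sup (inf m a) (inf m b)"
      unfolding inf_sup_distrib1[symmetric] m_def by (simp add: inf_assoc)
    ultimately have "m \<in> I" by simp
    with \<open>m \<in> M\<close> disj show False by blast
  qed
  show "bot \<notin> M" using lattice_idealD(1)[OF I] disj by blast
qed

theorem ex_Spec_mem_disjoint:
  fixes I :: "'a::{bounded_lattice,distrib_lattice} set"
  assumes I: "lattice_ideal I" and "c \<notin> I"
  shows "\<exists>P\<in>Spec. c \<in> P \<and> P \<inter> I = {}"
proof -
  let ?A = "{F. lattice_filter F \<and> c \<in> F \<and> F \<inter> I = {}}"
  have "lattice_filter {y. c \<le> y}" unfolding lattice_filter_def by (auto intro: order_trans)
  moreover have "{y. c \<le> y} \<inter> I = {}" using lattice_idealD(2)[OF I] \<open>c \<notin> I\<close> by blast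
  ultimately have "?A \<noteq> {}" by blast
  then have "\<exists>M\<in>?A. \<forall>F\<in>?A. M \<subseteq> F \<longrightarrow> F = M"
  proof (rule subset_Zorn_nonempty)
    fix C assume "C \<noteq> {}" "subset.chain ?A C"
    then show "\<Union>C \<in> ?A"
      unfolding subset_chain_def using lattice_filter_Union_chain[of C] by blast
  qed
  then obtain M where "M \<in> ?A" and max: "\<forall>F\<in>?A. M \<subseteq> F \<longrightarrow> F = M" by blast
  have "M \<in> Spec"
  proof (rule maximal_filter_prime[OF _ I])
    show "lattice_filter M" "M \<inter> I = {}" using \<open>M \<in> ?A\<close> by simp_all
    show "F = M" if "lattice_filter F" "M \<subseteq> F" "F \<inter> I = {}" for F
      using max \<open>M \<in> ?A\<close> that by blast
  qed
  with \<open>M \<in> ?A\<close> show ?thesis by blast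
qed


lemma cminus_le_iff:
  assumes "coheyting TYPE('a::{bounded_lattice,distrib_lattice})"
  shows "cminus (a::'a) b \<le> c \<longleftrightarrow> a \<le> sup b c"
proof -
  obtain c0 where c0: "a \<le> sup b c0" "\<And>c'. a \<le> sup b c' \<Longrightarrow> c0 \<le> c'"
    using assms unfolding coheyting_def by blast
  have "cminus a b = c0" unfolding cminus_def by (rule Least_equality) (use c0 in auto)
  moreover have "a \<le> sup b c" if "c0 \<le> c"
    using c0(1) by (rule order_trans) (simp add: le_supI2 that)
  ultimately show ?thesis using c0(2) by blast
qed

lemma le_sup_cminus:
  "coheyting TYPE('a::{bounded_lattice,distrib_lattice}) \<Longrightarrow> (a::'a) \<le> sup b (cminus a b)"
  by (simp add: cminus_le_iff[symmetric])

lemma cminus_le: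
  "coheyting TYPE('a::{bounded_lattice,distrib_lattice}) \<Longrightarrow> cminus (a::'a) b \<le> a"
  by (simp add: cminus_le_iff)

lemma cminus_self:
  "coheyting TYPE('a::{bounded_lattice,distrib_lattice}) \<Longrightarrow> cminus (a::'a) a = bot"
  by (simp add: cminus_le_iff bot_unique[symmetric])

lemma coheyting_homD:
  assumes "coheyting_hom \<phi>"
  shows "\<phi> bot = bot" and "\<phi> top = top" and "\<phi> (sup a b) = sup (\<phi> a) (\<phi> b)"
    and "\<phi> (inf a b) = inf (\<phi> a) (\<phi> b)" and "\<phi> (cminus a b) = cminus (\<phi> a) (\<phi> b)"
  using assms unfolding coheyting_hom_def by blast+

lemma coheyting_hom_mono:
  assumes "coheyting_hom \<phi>" and "a \<le> b"
  shows "\<phi> a \<le> \<phi> b"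
proof -
  have "\<phi> a = inf (\<phi> a) (\<phi> b)"
    using coheyting_homD(4)[OF assms(1), of a b] assms(2) by (simp add: inf.absorb1)
  then show ?thesis by (rule inf.orderI)
qed

text \<open>If \<phi> a = \<phi> t with t \<in> I, then a \<le> t \<squnion> (a - t) and a - t \<in> Ker \<phi>.\<close>

lemma vimage_image_ideal:
  fixes \<phi> :: "'a::{bounded_lattice,distrib_lattice} \<Rightarrow> 'b::{bounded_lattice,distrib_lattice}"
  assumes "coheyting TYPE('a)" and "coheyting TYPE('b)" and "coheyting_hom \<phi>"
    and I: "lattice_ideal I" and "Ker \<phi> \<subseteq> I"
  shows "\<phi> -` (\<phi> ` I) = I"
proof
  show "\<phi> -` (\<phi> ` I) \<subseteq> I"
  proof
    fix a assume "a \<in> \<phi> -` (\<phi> ` I)"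
    then obtain t where "t \<in> I" "\<phi> a = \<phi> t" by auto
    then have "\<phi> (cminus a t) = bot"
      by (simp add: coheyting_homD(5)[OF assms(3)] cminus_self[OF assms(2)])
    then have "cminus a t \<in> I" using \<open>Ker \<phi> \<subseteq> I\<close> unfolding Ker_def by blast
    with \<open>t \<in> I\<close> have "sup t (cminus a t) \<in> I" by (rule lattice_idealD(3)[OF I])
    then show "a \<in> I" by (rule lattice_idealD(2)[OF I _ le_sup_cminus[OF assms(1)]])
  qed
qed blast


inductive_set sup_closure :: "'a::bounded_lattice set \<Rightarrow> 'a set" for G where
  bot_in: "bot \<in> sup_closure G"
| gen_in: "g \<in> G \<Longrightarrow> g \<in> sup_closure G"
| sup_in: "a \<in> sup_closure G \<Longrightarrow> b \<in> sup_closure G \<Longrightarrow> sup a b \<in> sup_closure G"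

lemma sup_closure_mono:
  assumes "G \<subseteq> H"
  shows "sup_closure G \<subseteq> sup_closure H"
proof
  fix a assume "a \<in> sup_closure G"
  then show "a \<in> sup_closure H"
    by (induction rule: sup_closure.induct) (use assms in \<open>auto intro: sup_closure.intros\<close>)
qed

lemma sup_closure_subset_ideal:
  assumes I: "lattice_ideal I" and "G \<subseteq> I"
  shows "sup_closure G \<subseteq> I"
proof
  fix a assume "a \<in> sup_closure G"
  then show "a \<in> I"
  proof (induction rule: sup_closure.induct)
    case bot_in show ?case by (rule lattice_idealD(1)[OF I])
  next
    case (gen_in g) with \<open>G \<subseteq> I\<close> show ?case by blast
  next
    case (sup_in a b) then show ?case using lattice_idealD(3)[OF I] by blast
  qed
qed

lemma lattice_ideal_generated: "lattice_ideal {a. \<exists>j\<in>sup_closure G. a \<le> j}"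
  unfolding lattice_ideal_def
proof (intro conjI allI impI)
  show "bot \<in> {a. \<exists>j\<in>sup_closure G. a \<le> j}" using sup_closure.bot_in by blast
next
  fix a b assume "b \<in> {a. \<exists>j\<in>sup_closure G. a \<le> j}" "a \<le> b"
  then obtain j where "j \<in> sup_closure G" "b \<le> j" by blast
  with \<open>a \<le> b\<close> show "a \<in> {a. \<exists>j\<in>sup_closure G. a \<le> j}" using order_trans by blast
next
  fix a b assume "a \<in> {a. \<exists>j\<in>sup_closure G. a \<le> j}" "b \<in> {a. \<exists>j\<in>sup_closure G. a \<le> j}"
  then obtain i j where "i \<in> sup_closure G" "j \<in> sup_closure G" "a \<le> i" "b \<le> j" by blast
  moreover from this have "sup a b \<le> sup i j" by (intro sup_mono)
  ultimately show "sup a b \<in> {a. \<exists>j\<in>sup_closure G. a \<le> j}"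
    using sup_closure.sup_in by blast
qed

lemma image_sup_closure:
  assumes "\<phi> bot = bot" and "\<And>a b. \<phi> (sup a b) = sup (\<phi> a) (\<phi> b)"
  shows "\<phi> ` sup_closure G = sup_closure (\<phi> ` G)"
proof
  show "\<phi> ` sup_closure G \<subseteq> sup_closure (\<phi> ` G)"
  proof clarify
    fix a assume "a \<in> sup_closure G"
    then show "\<phi> a \<in> sup_closure (\<phi> ` G)"
      by (induction rule: sup_closure.induct) (simp_all add: assms sup_closure.intros)
  qed
  show "sup_closure (\<phi> ` G) \<subseteq> \<phi> ` sup_closure G"
  proof
    fix b assume "b \<in> sup_closure (\<phi> ` G)"
    then show "b \<in> \<phi> ` sup_closure G"
    proof (induction rule: sup_closure.induct)
      case bot_in
      show ?case by (rule image_eqI[where x = bot]) (simp_all add: assms(1) sup_closure.bot_in)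
    next
      case (gen_in g)
      then show ?case using sup_closure.gen_in by blast
    next
      case (sup_in a b)
      then obtain a' b' where "a' \<in> sup_closure G" "b' \<in> sup_closure G" "a = \<phi> a'" "b = \<phi> b'"
        by blast
      moreover from this have "sup a b = \<phi> (sup a' b')" by (simp add: assms(2))
      ultimately show ?case using sup_closure.sup_in by blast
    qed
  qed
qed

lemma surj_image_down_closure:
  fixes \<phi> :: "'a::lattice \<Rightarrow> 'b::lattice"
  assumes "surj \<phi>" and hom: "\<And>a b. \<phi> (inf a b) = inf (\<phi> a) (\<phi> b)"
  shows "\<phi> ` {a. \<exists>g\<in>G. a \<le> g} = {b. \<exists>g\<in>\<phi> ` G. b \<le> g}"
proof
  show "\<phi> ` {a. \<exists>g\<in>G. a \<le> g} \<subseteq> {b. \<exists>g\<in>\<phi> ` G. b \<le> g}"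
  proof clarify
    fix a g assume "g \<in> G" "a \<le> g"
    then have "\<phi> a = inf (\<phi> a) (\<phi> g)" by (simp add: hom[symmetric] inf.absorb1)
    then have "\<phi> a \<le> \<phi> g" by (rule inf.orderI)
    with \<open>g \<in> G\<close> show "\<exists>g\<in>\<phi> ` G. \<phi> a \<le> g" by blast
  qed
  show "{b. \<exists>g\<in>\<phi> ` G. b \<le> g} \<subseteq> \<phi> ` {a. \<exists>g\<in>G. a \<le> g}"
  proof clarify
    fix b g assume "g \<in> G" "b \<le> \<phi> g"
    obtain a where "b = \<phi> a" using \<open>surj \<phi>\<close> by blast
    then have "b = \<phi> (inf a g)" using \<open>b \<le> \<phi> g\<close> by (simp add: hom inf.absorb1)
    moreover have "inf a g \<in> {a. \<exists>g\<in>G. a \<le> g}" using \<open>g \<in> G\<close> inf_le2 by blast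
    ultimately show "b \<in> \<phi> ` {a. \<exists>g\<in>G. a \<le> g}" by blast
  qed
qed


lemma rank_ge_mono: "rank_ge R x n \<Longrightarrow> m \<le> n \<Longrightarrow> rank_ge R x m"
proof (induction m arbitrary: x n)
  case (Suc m)
  obtain n' where n: "n = Suc n'" using Suc.prems(2) by (cases n) auto
  with Suc.prems obtain y where "R y x" "rank_ge R y n'" by auto
  moreover have "m \<le> n'" using Suc.prems(2) n by simp
  ultimately have "R y x" "rank_ge R y m" using Suc.IH by blast+
  then show ?case by auto
qed simp

lemma rank_le_iff: "rank R x \<le> ereal (real n - 1) \<longleftrightarrow> \<not> rank_ge R x n"
proof
  assume le: "rank R x \<le> ereal (real n - 1)"
  show "\<not> rank_ge R x n"
  proof
    assume "rank_ge R x n"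
    then have "ereal (real n) \<le> rank R x" unfolding rank_def by (intro SUP_upper) simp
    then have "ereal (real n) \<le> ereal (real n - 1)" using le by (rule order_trans)
    then show False by simp
  qed
next
  assume "\<not> rank_ge R x n"
  have "real m \<le> real n - 1" if "rank_ge R x m" for m
  proof -
    have "m < n" using rank_ge_mono[OF that] \<open>\<not> rank_ge R x n\<close> by (meson not_less)
    then show ?thesis by linarith
  qed
  then show "rank R x \<le> ereal (real n - 1)" unfolding rank_def by (intro SUP_least) simp
qed

lemma ereal_le_rank_iff: "ereal (real n) \<le> rank R x \<longleftrightarrow> rank_ge R x n"
proof
  assume "rank_ge R x n"
  then show "ereal (real n) \<le> rank R x" unfolding rank_def by (intro SUP_upper) simp
next
  assume le: "ereal (real n) \<le> rank R x"
  show "rank_ge R x n"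
  proof (rule ccontr)
    assume "\<not> rank_ge R x n"
    then have "rank R x \<le> ereal (real n - 1)" by (rule rank_le_iff[THEN iffD2])
    with le have "ereal (real n) \<le> ereal (real n - 1)" by (rule order_trans)
    then show False by simp
  qed
qed

lemma rank_ge_converse:
  assumes "rank_ge R x k" and "P x" and "\<And>a b. R a b \<Longrightarrow> P a"
  shows "\<exists>y. P y \<and> rank_ge (\<lambda>a b. R b a) y k"
proof -
  have "\<exists>y. P y \<and> rank_ge (\<lambda>a b. R b a) y (m + k)"
    if "rank_ge R x k" "P x" "rank_ge (\<lambda>a b. R b a) x m" for x m
    using that
  proof (induction k arbitrary: x m)
    case (Suc k)
    obtain z where "R z x" "rank_ge R z k" using Suc.prems(1) by auto
    moreover from this have "rank_ge (\<lambda>a b. R b a) z (Suc m)" using Suc.prems(3) by auto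
    ultimately have "\<exists>y. P y \<and> rank_ge (\<lambda>a b. R b a) y (Suc m + k)"
      using Suc.IH assms(3) by blast
    then show ?case by simp
  qed auto
  from this[OF assms(1,2), of 0] show ?thesis by simp
qed


abbreviation spec_less :: "'a::{bounded_lattice,distrib_lattice} set \<Rightarrow> 'a set \<Rightarrow> bool" where
  "spec_less q q' \<equiv> q \<in> Spec \<and> q' \<in> Spec \<and> q \<subset> q'"

lemma coheight_eq_rank: "coheight p = rank (\<lambda>q q'. spec_less q' q) p"
  unfolding coheight_def by (simp add: conj_left_commute)

lemma mem_dpart_iff: "a \<in> dpart d \<longleftrightarrow> (\<forall>p\<in>Spec. a \<in> p \<longrightarrow> rank_ge spec_less p d)"
  unfolding dpart_def codim_def height_def by (auto simp: le_INF_iff ereal_le_rank_iff)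

lemma lattice_ideal_dpart: "lattice_ideal (dpart d)"
  unfolding lattice_ideal_def mem_dpart_iff
proof (intro conjI allI impI ballI)
  fix p :: "'a set" assume "p \<in> Spec" "bot \<in> p"
  then show "rank_ge spec_less p d" using Spec_bot by blast
next
  fix a b and p :: "'a set"
  assume "\<forall>p\<in>Spec. b \<in> p \<longrightarrow> rank_ge spec_less p d" "a \<le> b" "p \<in> Spec" "a \<in> p"
  then show "rank_ge spec_less p d" using Spec_up by blast
next
  fix a b and p :: "'a set"
  assume "\<forall>p\<in>Spec. a \<in> p \<longrightarrow> rank_ge spec_less p d" "\<forall>p\<in>Spec. b \<in> p \<longrightarrow> rank_ge spec_less p d"
    "p \<in> Spec" "sup a b \<in> p"
  then show "rank_ge spec_less p d" using Spec_sup by blast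
qed

lemma dimL_less_iff:
  "dimL TYPE('a::{bounded_lattice,distrib_lattice}) < ereal (real d)
     \<longleftrightarrow> (\<forall>p\<in>(Spec :: 'a set set). \<not> rank_ge (\<lambda>q q'. spec_less q' q) p d)"
proof
  assume less: "dimL TYPE('a) < ereal (real d)"
  show "\<forall>p\<in>(Spec :: 'a set set). \<not> rank_ge (\<lambda>q q'. spec_less q' q) p d"
  proof (intro ballI notI)
    fix p :: "'a set" assume "p \<in> Spec" "rank_ge (\<lambda>q q'. spec_less q' q) p d"
    then have "ereal (real d) \<le> coheight p" by (simp add: coheight_eq_rank ereal_le_rank_iff)
    also have "\<dots> \<le> dimL TYPE('a)"
      unfolding dimL_def dim_def using \<open>p \<in> Spec\<close> Spec_top by (blast intro: SUP_upper)
    finally show False using less by simp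
  qed
next
  assume none: "\<forall>p\<in>(Spec :: 'a set set). \<not> rank_ge (\<lambda>q q'. spec_less q' q) p d"
  have "dimL TYPE('a) \<le> ereal (real d - 1)"
    unfolding dimL_def dim_def coheight_eq_rank
  proof (rule SUP_least)
    fix p :: "'a set" assume "p \<in> {p \<in> Spec. top \<in> p}"
    with none show "rank (\<lambda>q q'. spec_less q' q) p \<le> ereal (real d - 1)"
      by (simp add: rank_le_iff)
  qed
  then show "dimL TYPE('a) < ereal (real d)" by (rule order.strict_trans1) simp
qed


lemma ex_height_ge_iff_ex_coheight_ge:
  "(\<exists>p\<in>(Spec :: 'a::{bounded_lattice,distrib_lattice} set set). rank_ge spec_less p d)
     \<longleftrightarrow> (\<exists>p\<in>(Spec :: 'a set set). rank_ge (\<lambda>q q'. spec_less q' q) p d)"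
proof
  assume "\<exists>p\<in>(Spec :: 'a set set). rank_ge spec_less p d"
  then obtain p :: "'a set" where "p \<in> Spec" "rank_ge spec_less p d" by blast
  then show "\<exists>p\<in>(Spec :: 'a set set). rank_ge (\<lambda>q q'. spec_less q' q) p d"
    using rank_ge_converse[where P = "\<lambda>p. p \<in> Spec"] by blast
next
  assume "\<exists>p\<in>(Spec :: 'a set set). rank_ge (\<lambda>q q'. spec_less q' q) p d"
  then obtain p :: "'a set" where "p \<in> Spec" "rank_ge (\<lambda>q q'. spec_less q' q) p d" by blast
  then show "\<exists>p\<in>(Spec :: 'a set set). rank_ge spec_less p d"
    using rank_ge_converse[where P = "\<lambda>p. p \<in> Spec"] by blast
qed


section \<open>Chain elements and the ideal dL\<close>

text \<open>If q \<subset> p are primes and chain_elem xs \<in> q, any x \<in> p - q gives chain_elem (x # xs) \<in> p;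
  conversely x \<in> p and chain_elem xs - x \<in> p lead to a smaller prime containing chain_elem xs
  (ex_Spec_psubset_mem). So these elements detect height.\<close>

fun chain_elem :: "'a::{bounded_lattice,distrib_lattice} list \<Rightarrow> 'a" where
  "chain_elem [] = top"
| "chain_elem (x # xs) = inf x (cminus (chain_elem xs) x)"

definition chain_elems :: "nat \<Rightarrow> 'a::{bounded_lattice,distrib_lattice} set" where
  "chain_elems d = {chain_elem xs | xs. length xs = d}"

lemma coheyting_hom_chain_elem: "coheyting_hom \<phi> \<Longrightarrow> \<phi> (chain_elem xs) = chain_elem (map \<phi> xs)"
  by (induction xs) (simp_all add: coheyting_homD)

lemma image_chain_elems_subset: "coheyting_hom \<phi> \<Longrightarrow> \<phi> ` chain_elems d \<subseteq> chain_elems d"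
  unfolding chain_elems_def by (auto simp: coheyting_hom_chain_elem)

lemma surj_image_chain_elems:
  fixes \<phi> :: "'a::{bounded_lattice,distrib_lattice} \<Rightarrow> 'b::{bounded_lattice,distrib_lattice}"
  assumes "coheyting_hom \<phi>" and "surj \<phi>"
  shows "\<phi> ` chain_elems d = chain_elems d"
proof
  show "chain_elems d \<subseteq> \<phi> ` chain_elems d"
  proof
    fix b :: 'b assume "b \<in> chain_elems d"
    then obtain xs where "length xs = d" "b = chain_elem xs" unfolding chain_elems_def by blast
    moreover have "map \<phi> (map (inv \<phi>) xs) = xs" using \<open>surj \<phi>\<close> by (simp add: comp_def surj_f_inv_f)
    ultimately have "b = \<phi> (chain_elem (map (inv \<phi>) xs))" "length (map (inv \<phi>) xs) = d"
      by (simp_all add: coheyting_hom_chain_elem[OF assms(1)])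
    then show "b \<in> \<phi> ` chain_elems d" unfolding chain_elems_def by blast
  qed
qed (rule image_chain_elems_subset[OF assms(1)])

lemma ex_Spec_psubset_mem:
  assumes ch: "coheyting TYPE('a::{bounded_lattice,distrib_lattice})"
    and r: "r \<in> Spec" and "x \<in> r" and "cminus u x \<in> r"
  shows "\<exists>r'\<in>Spec. r' \<subset> r \<and> (u::'a) \<in> r'"
proof -
  let ?I = "{y. \<exists>c\<in>- r. y \<le> sup c x}"
  have "cminus u x \<notin> ?I"
  proof
    assume "cminus u x \<in> ?I"
    then obtain c where "c \<notin> r" "cminus u x \<le> sup c x" by blast
    have "u \<le> sup x (cminus u x)" by (rule le_sup_cminus[OF ch])
    also have "\<dots> \<le> sup x (sup c x)" using \<open>cminus u x \<le> sup c x\<close> by (rule sup_mono[OF order_refl])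
    also have "\<dots> = sup x c" by (simp add: sup_aci)
    finally have "u \<le> sup x c" .
    then have "cminus u x \<le> c" by (simp add: cminus_le_iff[OF ch])
    with \<open>cminus u x \<in> r\<close> have "c \<in> r" by (rule Spec_up[OF r])
    with \<open>c \<notin> r\<close> show False by contradiction
  qed
  then obtain r' where r': "r' \<in> Spec" "cminus u x \<in> r'" "r' \<inter> ?I = {}"
    using ex_Spec_mem_disjoint[OF lattice_ideal_adjoin[OF lattice_ideal_Compl_Spec[OF r]]]
    by blast
  have "r' \<subseteq> r" using r'(3) sup_ge1 by blast
  moreover have "x \<notin> r'" using r'(3) Spec_bot[OF r] by fastforce
  moreover have "u \<in> r'" using r'(2) cminus_le[OF ch] by (rule Spec_up[OF r'(1)])
  ultimately show ?thesis using r'(1) \<open>x \<in> r\<close> by blast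
qed

lemma rank_ge_if_chain_elem_mem:
  assumes ch: "coheyting TYPE('a::{bounded_lattice,distrib_lattice})"
  shows "r \<in> Spec \<Longrightarrow> chain_elem xs \<in> (r::'a set) \<Longrightarrow> rank_ge spec_less r (length xs)"
proof (induction xs arbitrary: r)
  case (Cons x xs)
  have "x \<in> r" "cminus (chain_elem xs) x \<in> r"
    using Cons.prems Spec_up[OF Cons.prems(1)] by simp_all
  then obtain r' where "r' \<in> Spec" "r' \<subset> r" "chain_elem xs \<in> r'"
    using ex_Spec_psubset_mem[OF ch Cons.prems(1)] by blast
  moreover from this have "rank_ge spec_less r' (length xs)" using Cons.IH by blast
  ultimately show ?case using Cons.prems(1) by auto
qed simp

lemma chain_elem_mem_if_rank_ge:
  assumes ch: "coheyting TYPE('a::{bounded_lattice,distrib_lattice})"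
  shows "p \<in> Spec \<Longrightarrow> rank_ge spec_less p k \<Longrightarrow> \<exists>xs. length xs = k \<and> chain_elem xs \<in> (p::'a set)"
proof (induction k arbitrary: p)
  case 0
  show ?case using Spec_top[OF "0.prems"(1)] by (intro exI[of _ "[]"]) simp
next
  case (Suc k)
  obtain q where q: "q \<in> Spec" "q \<subset> p" "rank_ge spec_less q k" using Suc.prems(2) by auto
  obtain xs where xs: "length xs = k" "chain_elem xs \<in> q" using Suc.IH[OF q(1,3)] by blast
  obtain x where "x \<in> p" "x \<notin> q" using q(2) by blast
  have "sup x (cminus (chain_elem xs) x) \<in> q"
    using le_sup_cminus[OF ch] xs(2) by (rule Spec_up[OF q(1), rotated])
  then have "cminus (chain_elem xs) x \<in> p" using Spec_sup[OF q(1)] \<open>x \<notin> q\<close> q(2) by blast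
  with \<open>x \<in> p\<close> have "chain_elem (x # xs) \<in> p" by (simp add: Spec_inf[OF Suc.prems(1)])
  then show ?case using xs(1) by (intro exI[of _ "x # xs"]) simp
qed

lemma chain_elems_subset_dpart:
  assumes "coheyting TYPE('a::{bounded_lattice,distrib_lattice})"
  shows "chain_elems d \<subseteq> (dpart d :: 'a set)"
  unfolding chain_elems_def by (auto simp: mem_dpart_iff intro: rank_ge_if_chain_elem_mem[OF assms])

lemma dpart_eq_generated:
  assumes ch: "coheyting TYPE('a::{bounded_lattice,distrib_lattice})"
  shows "(dpart d :: 'a set) = {a. \<exists>j\<in>sup_closure (chain_elems d). a \<le> j}"
proof
  have "sup_closure (chain_elems d) \<subseteq> (dpart d :: 'a set)"
    by (rule sup_closure_subset_ideal[OF lattice_ideal_dpart chain_elems_subset_dpart[OF ch]])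
  then show "{a. \<exists>j\<in>sup_closure (chain_elems d). a \<le> j} \<subseteq> (dpart d :: 'a set)"
    using lattice_idealD(2)[OF lattice_ideal_dpart] by blast
  show "(dpart d :: 'a set) \<subseteq> {a. \<exists>j\<in>sup_closure (chain_elems d). a \<le> j}"
  proof
    fix a :: 'a assume a: "a \<in> dpart d"
    show "a \<in> {a. \<exists>j\<in>sup_closure (chain_elems d). a \<le> j}"
    proof (rule ccontr)
      assume "a \<notin> {a. \<exists>j\<in>sup_closure (chain_elems d). a \<le> j}"
      then obtain P where P: "P \<in> Spec" "a \<in> P"
        and disj: "P \<inter> {a. \<exists>j\<in>sup_closure (chain_elems d). a \<le> j} = {}"
        using ex_Spec_mem_disjoint[OF lattice_ideal_generated] by blast
      have "rank_ge spec_less P d" using a P unfolding mem_dpart_iff by blast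
      then obtain xs where "length xs = d" "chain_elem xs \<in> P"
        using chain_elem_mem_if_rank_ge[OF ch P(1)] by blast
      then have "chain_elem xs \<in> sup_closure (chain_elems d)"
        unfolding chain_elems_def by (blast intro: sup_closure.gen_in)
      with \<open>chain_elem xs \<in> P\<close> disj show False by blast
    qed
  qed
qed


lemma dpart_eq_bot_iff:
  assumes ch: "coheyting TYPE('a::{bounded_lattice,distrib_lattice})"
  shows "(dpart d :: 'a set) = {bot} \<longleftrightarrow> (\<forall>p\<in>(Spec :: 'a set set). \<not> rank_ge spec_less p d)"
proof
  assume eq: "(dpart d :: 'a set) = {bot}"
  show "\<forall>p\<in>(Spec :: 'a set set). \<not> rank_ge spec_less p d"
  proof (intro ballI notI)
    fix p :: "'a set" assume "p \<in> Spec" "rank_ge spec_less p d"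
    then obtain xs where "length xs = d" "chain_elem xs \<in> p"
      using chain_elem_mem_if_rank_ge[OF ch] by blast
    moreover from this have "chain_elem xs \<in> (dpart d :: 'a set)"
      using chain_elems_subset_dpart[OF ch] unfolding chain_elems_def by blast
    ultimately show False using eq Spec_bot[OF \<open>p \<in> Spec\<close>] by simp
  qed
next
  assume none: "\<forall>p\<in>(Spec :: 'a set set). \<not> rank_ge spec_less p d"
  show "(dpart d :: 'a set) = {bot}"
  proof (intro equalityI subsetI)
    fix a :: 'a assume "a \<in> dpart d"
    show "a \<in> {bot}"
    proof (rule ccontr)
      assume "a \<notin> {bot}"
      then obtain p where "p \<in> Spec" "a \<in> p"
        using ex_Spec_mem_disjoint[OF lattice_ideal_singleton_bot] by blast
      with \<open>a \<in> dpart d\<close> none show False unfolding mem_dpart_iff by blast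
    qed
  qed (use lattice_idealD(1)[OF lattice_ideal_dpart] in simp)
qed

lemma dimL_less_iff_dpart_eq_bot:
  assumes "coheyting TYPE('a::{bounded_lattice,distrib_lattice})"
  shows "dimL TYPE('a) < ereal (real d) \<longleftrightarrow> (dpart d :: 'a set) = {bot}"
  unfolding dimL_less_iff dpart_eq_bot_iff[OF assms]
  using ex_height_ge_iff_ex_coheight_ge[where 'a = 'a] by blast

lemma eps_eqI:
  fixes e :: "'a::{bounded_lattice,distrib_lattice}"
  shows "dpart d = {a. a \<le> e} \<Longrightarrow> eps d = e"
  unfolding eps_def
proof (rule the_equality)
  fix e' :: 'a assume "dpart d = {a. a \<le> e}" "dpart d = {a. a \<le> e'}"
  then have "e' \<le> e" "e \<le> e'" using order_refl by blast+
  then show "e' = e" by (rule antisym)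
qed


lemma image_dpart_subset:
  fixes \<phi> :: "'a::{bounded_lattice,distrib_lattice} \<Rightarrow> 'b::{bounded_lattice,distrib_lattice}"
  assumes "coheyting TYPE('a)" and "coheyting TYPE('b)" and h: "coheyting_hom \<phi>"
  shows "\<phi> ` dpart d \<subseteq> dpart d"
proof -
  have "\<phi> ` dpart d \<subseteq> {b. \<exists>j\<in>\<phi> ` sup_closure (chain_elems d). b \<le> j}"
    unfolding dpart_eq_generated[OF assms(1)] using coheyting_hom_mono[OF h] by blast
  also have "\<dots> = {b. \<exists>j\<in>sup_closure (\<phi> ` chain_elems d). b \<le> j}"
    by (simp only: image_sup_closure[OF coheyting_homD(1,3)[OF h]])
  also have "\<dots> \<subseteq> {b. \<exists>j\<in>sup_closure (chain_elems d). b \<le> j}"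
    using sup_closure_mono[OF image_chain_elems_subset[OF h]] by blast
  also have "\<dots> = dpart d" by (rule dpart_eq_generated[OF assms(2), symmetric])
  finally show ?thesis .
qed

lemma surj_image_dpart:
  fixes \<phi> :: "'a::{bounded_lattice,distrib_lattice} \<Rightarrow> 'b::{bounded_lattice,distrib_lattice}"
  assumes "coheyting TYPE('a)" and "coheyting TYPE('b)" and h: "coheyting_hom \<phi>" and "surj \<phi>"
  shows "\<phi> ` dpart d = dpart d"
proof -
  have "\<phi> ` dpart d = {b. \<exists>j\<in>\<phi> ` sup_closure (chain_elems d). b \<le> j}"
    unfolding dpart_eq_generated[OF assms(1)]
    by (rule surj_image_down_closure[OF \<open>surj \<phi>\<close> coheyting_homD(4)[OF h]])
  also have "\<dots> = {b. \<exists>j\<in>sup_closure (\<phi> ` chain_elems d). b \<le> j}"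
    by (simp only: image_sup_closure[OF coheyting_homD(1,3)[OF h]])
  also have "\<dots> = dpart d"
    by (simp only: surj_image_chain_elems[OF h \<open>surj \<phi>\<close>] dpart_eq_generated[OF assms(2)])
  finally show ?thesis .
qed

lemma dimL_less_iff_dpart_subset_Ker:
  fixes \<phi> :: "'a::{bounded_lattice,distrib_lattice} \<Rightarrow> 'b::{bounded_lattice,distrib_lattice}"
  assumes "coheyting TYPE('a)" and "coheyting TYPE('b)" and "coheyting_hom \<phi>" and "surj \<phi>"
  shows "dimL TYPE('b) < ereal (real d) \<longleftrightarrow> (dpart d :: 'a set) \<subseteq> Ker \<phi>"
proof -
  have "\<phi> ` dpart d = {bot} \<longleftrightarrow> (dpart d :: 'a set) \<subseteq> Ker \<phi>"
  proof
    assume "(dpart d :: 'a set) \<subseteq> Ker \<phi>"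
    moreover have "\<phi> bot \<in> \<phi> ` dpart d" using lattice_idealD(1)[OF lattice_ideal_dpart] by blast
    ultimately show "\<phi> ` dpart d = {bot}"
      unfolding Ker_def coheyting_homD(1)[OF assms(3)] by blast
  qed (auto simp: Ker_def)
  then show ?thesis
    by (simp only: dimL_less_iff_dpart_eq_bot[OF assms(2)] surj_image_dpart[OF assms, symmetric])
qed

lemma Ker_subset_dpart_iff:
  fixes \<phi> :: "'a::{bounded_lattice,distrib_lattice} \<Rightarrow> 'b::{bounded_lattice,distrib_lattice}"
  assumes "coheyting TYPE('a)" and "coheyting TYPE('b)" and "coheyting_hom \<phi>" and "surj \<phi>"
  shows "Ker \<phi> \<subseteq> dpart d \<longleftrightarrow> \<phi> -` (dpart d :: 'b set) = dpart d"
proof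
  assume "Ker \<phi> \<subseteq> dpart d"
  then show "\<phi> -` (dpart d :: 'b set) = dpart d"
    unfolding surj_image_dpart[OF assms, symmetric]
    by (rule vimage_image_ideal[OF assms(1-3) lattice_ideal_dpart])
next
  assume "\<phi> -` (dpart d :: 'b set) = dpart d"
  moreover have "Ker \<phi> \<subseteq> \<phi> -` (dpart d :: 'b set)"
    unfolding Ker_def using lattice_idealD(1)[OF lattice_ideal_dpart] by auto
  ultimately show "Ker \<phi> \<subseteq> dpart d" by simp
qed

lemma surj_image_principal_dpart:
  fixes \<phi> :: "'a::{bounded_lattice,distrib_lattice} \<Rightarrow> 'b::{bounded_lattice,distrib_lattice}"
  assumes "coheyting TYPE('a)" and "coheyting TYPE('b)" and "coheyting_hom \<phi>" and "surj \<phi>"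
    and "principal_ideal (dpart d :: 'a set)"
  shows "principal_ideal (dpart d :: 'b set) \<and> \<phi> (eps d) = eps d"
proof -
  obtain e :: 'a where e: "dpart d = {a. a \<le> e}"
    using assms(5) unfolding principal_ideal_def by blast
  have "(dpart d :: 'b set) = \<phi> ` {a. \<exists>g\<in>{e}. a \<le> g}"
    using surj_image_dpart[OF assms(1-4), of d, symmetric] unfolding e by simp
  also have "\<dots> = {b. \<exists>g\<in>\<phi> ` {e}. b \<le> g}"
    by (rule surj_image_down_closure[OF assms(4) coheyting_homD(4)[OF assms(3)]])
  finally have e': "(dpart d :: 'b set) = {b. b \<le> \<phi> e}" by simp
  then have "principal_ideal (dpart d :: 'b set)" unfolding principal_ideal_def by blast
  moreover have "\<phi> (eps d) = eps d" by (simp add: eps_eqI[OF e] eps_eqI[OF e'])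
  ultimately show ?thesis ..
qed

theorem corollary3p9:
  fixes \<phi> :: "'a::{bounded_lattice,distrib_lattice} \<Rightarrow> 'b::{bounded_lattice,distrib_lattice}"
    and d :: nat
  assumes "coheyting TYPE('a)" and "coheyting TYPE('b)"
    and "coheyting_hom \<phi>" and "0 < d"
  shows "(\<phi> ` dpart d \<subseteq> dpart d)
       \<and> (surj \<phi> \<longrightarrow>
            \<phi> ` dpart d = dpart d
          \<and> (dimL TYPE('b) < ereal (real d) \<longleftrightarrow> (dpart d :: 'a set) \<subseteq> Ker \<phi>)
          \<and> (Ker \<phi> \<subseteq> dpart d \<longleftrightarrow> \<phi> -` (dpart d :: 'b set) = dpart d))
       \<and> (surj \<phi> \<and> principal_ideal (dpart d :: 'a set) \<longrightarrow>
            principal_ideal (dpart d :: 'b set) \<and> \<phi> (eps d) = eps d)"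
  \<comment> \<open>The argument works for every d.\<close>
proof (intro conjI impI)
  show "\<phi> ` dpart d \<subseteq> dpart d" by (rule image_dpart_subset[OF assms(1-3)])
next
  assume "surj \<phi>"
  show "\<phi> ` dpart d = dpart d" by (rule surj_image_dpart[OF assms(1-3) \<open>surj \<phi>\<close>])
  show "dimL TYPE('b) < ereal (real d) \<longleftrightarrow> (dpart d :: 'a set) \<subseteq> Ker \<phi>"
    by (rule dimL_less_iff_dpart_subset_Ker[OF assms(1-3) \<open>surj \<phi>\<close>])
  show "Ker \<phi> \<subseteq> dpart d \<longleftrightarrow> \<phi> -` (dpart d :: 'b set) = dpart d"
    by (rule Ker_subset_dpart_iff[OF assms(1-3) \<open>surj \<phi>\<close>])
next
  assume "surj \<phi> \<and> principal_ideal (dpart d :: 'a set)"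
  then show "principal_ideal (dpart d :: 'b set)" "\<phi> (eps d) = eps d"
    using surj_image_principal_dpart[OF assms(1-3)] by blast+
qed

end
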